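(* Let $A\subset\mathcal{N}=\omega^\omega$, let $\mathcal{F}=\mathcal{F}_A$ be the family of all closed and discrete subsets of $A$, let $\{T_a : a\in A\}$ be an $(A,\mathcal{F})$-Reznichenko family of trees and $\mathcal{T}=\bigcup_{a\in A}T_a$. Let $\{U_n\}_{n<\omega}$ be a disjoint family of open subsets of $A$ whose union is closed in $A$, and let $\mathcal{T}=\bigcup_{n<\omega}D_n$. Then there exists $n<\omega$ such that $D_n\cap T_a$ is successively dense in the tree $T_a$ for every $a\in U_n$.
   Context: A tree is a partially ordered set $(T,\leq)$ in which for each $t$ the set $\{s: s<t\}$ is well ordered and which has a minimum, the root. An immediate successor of $t$ is a node $s>t$ with no $r$ satisfying $t<r<s$. The height is the least ordinal $\alpha$ such that no node has predecessor set of order type $\alpha$. A segment is a set $S\subset T$ of pairwise comparable elements such that $t\leq r\leq s$ with $t,s\in S$ implies $r\in S$; it is initial if it contains the root. For a set $A$ with $|A|\leq\mathfrak{c}$ and a hereditary family $\mathcal{F}$ of subsets of $A$, an $(A,\mathcal{F})$-Reznichenko family of trees is a family $\{T_a:a\in A\}$ of trees such that: (1) each $T_a$ has height $\omega$ and every node has $\mathfrak{c}$ many immediate successors; (2) $T_a\cap A=\{a\}$ and $a$ is the root of $T_a$; (3) for every $t\in\bigcup_a T_a$, $\{a\in A: t\in T_a\}\in\mathcal{F}$; (4) for $a\neq b$ and segments $S\subset T_a$, $S'\subset T_b$, $|S\cap S'|\leq 1$; (5) for every $B\in\mathcal{F}$ and every disjoint family $\{S_b:b\in B\}$ with $S_b$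 a finite initial segment of $T_b$, there are $\mathfrak{c}$ many $t$ that are simultaneously an immediate successor of $S_b$ in $T_b$ for all $b\in B$. A subset $D$ of a tree $T$ is successively dense if there is a countable family $R$ of immediate successors of the root such that every $t\in T$ incomparable with every element of $R$ has an immediate successor in $D$. *)

theory Defs
  imports "HOL-Analysis.Analysis" "HOL-Library.Equipollence"
begin

definition tlt :: "('n \<Rightarrow> 'n \<Rightarrow> bool) \<Rightarrow> 'n \<Rightarrow> 'n \<Rightarrow> bool" where
  "tlt le x y \<longleftrightarrow> le x y \<and> x \<noteq> y"

definition tpred :: "'n set \<Rightarrow> ('n \<Rightarrow> 'n \<Rightarrow> bool) \<Rightarrow> 'n \<Rightarrow> 'n set" where
  "tpred T le t = {s \<in> T. tlt le s t}"

definition is_tree :: "'n set \<Rightarrow> ('n \<Rightarrow> 'n \<Rightarrow> bool) \<Rightarrow> bool" where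
  "is_tree T le \<longleftrightarrow>
     (\<forall>x\<in>T. le x x) \<and>
     (\<forall>x\<in>T. \<forall>y\<in>T. le x y \<and> le y x \<longrightarrow> x = y) \<and>
     (\<forall>x\<in>T. \<forall>y\<in>T. \<forall>z\<in>T. le x y \<and> le y z \<longrightarrow> le x z) \<and>
     (\<forall>t\<in>T. (\<forall>x\<in>tpred T le t. \<forall>y\<in>tpred T le t. le x y \<or> le y x) \<and>
              (\<forall>X. X \<subseteq> tpred T le t \<and> X \<noteq> {} \<longrightarrow> (\<exists>m\<in>X. \<forall>x\<in>X. le m x))) \<and>
     (\<exists>r\<in>T. \<forall>t\<in>T. le r t)"

definition tree_root :: "'n set \<Rightarrow> ('n \<Rightarrow> 'n \<Rightarrow> bool) \<Rightarrow> 'n" where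
  "tree_root T le = (THE r. r \<in> T \<and> (\<forall>t\<in>T. le r t))"

text \<open>Height omega: every predecessor set is finite (order type some n < omega) and
  every finite order type n is realised by some node.\<close>
definition height_omega :: "'n set \<Rightarrow> ('n \<Rightarrow> 'n \<Rightarrow> bool) \<Rightarrow> bool" where
  "height_omega T le \<longleftrightarrow>
     (\<forall>t\<in>T. finite (tpred T le t)) \<and> (\<forall>n::nat. \<exists>t\<in>T. card (tpred T le t) = n)"

definition imm_succ :: "'n set \<Rightarrow> ('n \<Rightarrow> 'n \<Rightarrow> bool) \<Rightarrow> 'n \<Rightarrow> 'n \<Rightarrow> bool" where
  "imm_succ T le t s \<longleftrightarrow> s \<in> T \<and> tlt le t s \<and> \<not> (\<exists>r\<in>T. tlt le t r \<and> tlt le r s)"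

definition tsegment :: "'n set \<Rightarrow> ('n \<Rightarrow> 'n \<Rightarrow> bool) \<Rightarrow> 'n set \<Rightarrow> bool" where
  "tsegment T le S \<longleftrightarrow> S \<subseteq> T \<and> (\<forall>x\<in>S. \<forall>y\<in>S. le x y \<or> le y x) \<and>
     (\<forall>t\<in>S. \<forall>s\<in>S. \<forall>r\<in>T. le t r \<and> le r s \<longrightarrow> r \<in> S)"

definition initial_segment :: "'n set \<Rightarrow> ('n \<Rightarrow> 'n \<Rightarrow> bool) \<Rightarrow> 'n set \<Rightarrow> bool" where
  "initial_segment T le S \<longleftrightarrow> tsegment T le S \<and> tree_root T le \<in> S"

text \<open>t is an immediate successor of the (finite, nonempty) segment S: an immediate
  successor of the largest element of S.\<close>
definition imm_succ_seg :: "'n set \<Rightarrow> ('n \<Rightarrow> 'n \<Rightarrow> bool) \<Rightarrow> 'n set \<Rightarrow> 'n \<Rightarrow> bool" where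
  "imm_succ_seg T le S t \<longleftrightarrow> (\<exists>m\<in>S. (\<forall>s\<in>S. le s m) \<and> imm_succ T le m t)"

definition successively_dense :: "'n set \<Rightarrow> ('n \<Rightarrow> 'n \<Rightarrow> bool) \<Rightarrow> 'n set \<Rightarrow> bool" where
  "successively_dense T le D \<longleftrightarrow> D \<subseteq> T \<and>
     (\<exists>R. countable R \<and> (\<forall>r\<in>R. imm_succ T le (tree_root T le) r) \<and>
        (\<forall>t\<in>T. (\<forall>r\<in>R. \<not> le t r \<and> \<not> le r t) \<longrightarrow> (\<exists>s\<in>D. imm_succ T le t s)))"

text \<open>(A,F)-Reznichenko family. The points of A are embedded among the nodes via e.\<close>
definition reznichenko_family ::
  "'a set \<Rightarrow> 'a set set \<Rightarrow> ('a \<Rightarrow> 'n) \<Rightarrow> ('a \<Rightarrow> 'n set) \<Rightarrow> ('a \<Rightarrow> 'n \<Rightarrow> 'n \<Rightarrow> bool) \<Rightarrow> bool" where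
  "reznichenko_family A F e T le \<longleftrightarrow>
     A \<lesssim> (UNIV :: real set) \<and>
     (\<forall>a\<in>A. is_tree (T a) (le a) \<and> height_omega (T a) (le a) \<and>
        (\<forall>t\<in>T a. {s. imm_succ (T a) (le a) t s} \<approx> (UNIV :: real set))) \<and>
     (\<forall>a\<in>A. T a \<inter> e ` A = {e a} \<and> e a \<in> T a \<and> (\<forall>t\<in>T a. le a (e a) t)) \<and>
     (\<forall>t\<in>(\<Union>a\<in>A. T a). {a\<in>A. t \<in> T a} \<in> F) \<and>
     (\<forall>a\<in>A. \<forall>b\<in>A. \<forall>S S'. a \<noteq> b \<and> tsegment (T a) (le a) S \<and> tsegment (T b) (le b) S'
         \<longrightarrow> (\<forall>x\<in>S \<inter> S'. \<forall>y\<in>S \<inter> S'. x = y)) \<and>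
     (\<forall>B\<in>F. \<forall>Sg. (\<forall>b\<in>B. finite (Sg b) \<and> initial_segment (T b) (le b) (Sg b)) \<and>
         (\<forall>b\<in>B. \<forall>b'\<in>B. b \<noteq> b' \<longrightarrow> Sg b \<inter> Sg b' = {})
       \<longrightarrow> {t \<in> (\<Union>a\<in>A. T a). \<forall>b\<in>B. imm_succ_seg (T b) (le b) (Sg b) t} \<approx> (UNIV :: real set))"

definition closed_discrete_subsets :: "('a::topological_space) set \<Rightarrow> 'a set set" where
  "closed_discrete_subsets A =
     {D. D \<subseteq> A \<and> closedin (top_of_set A) D \<and> (\<forall>x\<in>D. \<exists>U. open U \<and> U \<inter> D = {x})}"

end

theory Submission
  imports Defs
begin

text \<open>Suppose no \<open>n\<close> works and pick \<open>a\<^sub>n \<in> U\<^sub>n\<close> such that \<open>D\<^sub>n \<inter> T\<^bsub>a\<^sub>n\<^esub>\<close> is not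
  successively dense. Since the \<open>U\<^sub>n\<close> are disjoint open sets with closed union, \<open>{a\<^sub>n}\<close> is
  closed and discrete in \<open>A\<close>. Failure of successive density of \<open>D\<^sub>n \<inter> T\<^bsub>a\<^sub>n\<^esub>\<close> lets us
  choose, inductively, nodes \<open>s\<^sub>n \<in> T\<^bsub>a\<^sub>n\<^esub>\<close> without immediate successor in \<open>D\<^sub>n\<close> whose
  branches avoid the (finitely many) nodes on the branches chosen before. By property (5) of
  a Reznichenko family the pairwise disjoint branches have a common immediate successor \<open>t\<close>;
  but \<open>t \<in> D\<^sub>m\<close> for some \<open>m\<close>, and then \<open>t\<close> is an immediate successor of \<open>s\<^sub>m\<close> in \<open>D\<^sub>m\<close>.\<close>

lemma tree_refl: "is_tree T le \<Longrightarrow> x \<in> T \<Longrightarrow> le x x"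
  unfolding is_tree_def by (elim conjE) blast

lemma tree_antisym: "is_tree T le \<Longrightarrow> x \<in> T \<Longrightarrow> y \<in> T \<Longrightarrow> le x y \<Longrightarrow> le y x \<Longrightarrow> x = y"
  unfolding is_tree_def by (elim conjE) blast

lemma tree_trans:
  "is_tree T le \<Longrightarrow> x \<in> T \<Longrightarrow> y \<in> T \<Longrightarrow> z \<in> T \<Longrightarrow> le x y \<Longrightarrow> le y z \<Longrightarrow> le x z"
  unfolding is_tree_def by (elim conjE) blast

lemma tree_tpred_chain:
  "is_tree T le \<Longrightarrow> t \<in> T \<Longrightarrow> x \<in> tpred T le t \<Longrightarrow> y \<in> tpred T le t \<Longrightarrow> le x y \<or> le y x"
  unfolding is_tree_def by (elim conjE) blast

lemma tree_tpred_least: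
  "is_tree T le \<Longrightarrow> t \<in> T \<Longrightarrow> X \<subseteq> tpred T le t \<Longrightarrow> X \<noteq> {} \<Longrightarrow> \<exists>m\<in>X. \<forall>x\<in>X. le m x"
  unfolding is_tree_def by (elim conjE) blast

lemma tree_root_eqI:
  assumes "is_tree T le" "r \<in> T" "\<And>t. t \<in> T \<Longrightarrow> le r t"
  shows "tree_root T le = r"
  unfolding tree_root_def
proof (rule the_equality)
  show "r \<in> T \<and> (\<forall>t\<in>T. le r t)" using assms by blast
  show "x = r" if "x \<in> T \<and> (\<forall>t\<in>T. le x t)" for x
    using that assms tree_antisym by metis
qed

lemma imm_succ_root_below:
  assumes tree: "is_tree T le" and root: "r \<in> T" "\<And>t. t \<in> T \<Longrightarrow> le r t"
    and x: "x \<in> T" "x \<noteq> r"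
  shows "\<exists>m. imm_succ T le r m \<and> le m x"
proof -
  define Y where "Y = {y \<in> T. tlt le r y \<and> le y x}"
  have least: "\<exists>m\<in>Y. \<forall>y\<in>Y. le m y"
  proof (cases "Y \<inter> tpred T le x = {}")
    case True
    then have "Y = {x}"
      using x root tree_refl[OF tree] unfolding Y_def tpred_def tlt_def by auto
    then show ?thesis using x tree_refl[OF tree] by auto
  next
    case False
    then obtain m where m: "m \<in> Y \<inter> tpred T le x" "\<forall>y\<in>Y \<inter> tpred T le x. le m y"
      using tree_tpred_least[OF tree x(1), of "Y \<inter> tpred T le x"] by blast
    have "le m y" if "y \<in> Y" for y
      using that m by (cases "y = x") (auto simp: Y_def tpred_def tlt_def)
    with m show ?thesis by blast
  qed
  then obtain m where m: "m \<in> T" "tlt le r m" "le m x" and min: "\<forall>y\<in>Y. le m y"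
    unfolding Y_def by blast
  have "\<not> (\<exists>q\<in>T. tlt le r q \<and> tlt le q m)"
  proof
    assume "\<exists>q\<in>T. tlt le r q \<and> tlt le q m"
    then obtain q where q: "q \<in> T" "tlt le r q" "le q m" "q \<noteq> m"
      unfolding tlt_def by blast
    then have "q \<in> Y"
      using tree_trans[OF tree q(1) m(1) x(1)] m(3) unfolding Y_def by blast
    then show False
      using min tree_antisym[OF tree q(1) m(1)] q(3,4) by blast
  qed
  with m show ?thesis unfolding imm_succ_def by blast
qed

definition tbranch :: "'n set \<Rightarrow> ('n \<Rightarrow> 'n \<Rightarrow> bool) \<Rightarrow> 'n \<Rightarrow> 'n set" where
  "tbranch T le s = {y \<in> T. le y s}"

lemma tbranch_eq_insert_tpred:
  "is_tree T le \<Longrightarrow> s \<in> T \<Longrightarrow> tbranch T le s = insert s (tpred T le s)"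
  unfolding tbranch_def tpred_def tlt_def by (auto intro: tree_refl)

lemma finite_tbranch:
  "is_tree T le \<Longrightarrow> s \<in> T \<Longrightarrow> finite (tpred T le s) \<Longrightarrow> finite (tbranch T le s)"
  by (simp add: tbranch_eq_insert_tpred)

lemma initial_segment_tbranch:
  assumes tree: "is_tree T le" and root: "r \<in> T" "\<And>t. t \<in> T \<Longrightarrow> le r t" and s: "s \<in> T"
  shows "initial_segment T le (tbranch T le s)"
proof -
  have chain: "le x y \<or> le y x" if "x \<in> tbranch T le s" "y \<in> tbranch T le s" for x y
  proof (cases "x = s \<or> y = s")
    case True
    with that show ?thesis unfolding tbranch_def by auto
  next
    case False
    with that show ?thesis
      using tree_tpred_chain[OF tree s] by (auto simp: tbranch_eq_insert_tpred[OF tree s])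
  qed
  have convex: "q \<in> tbranch T le s" if "y \<in> tbranch T le s" "q \<in> T" "le q y" for y q
    using that tree_trans[OF tree _ _ s] unfolding tbranch_def by blast
  have "tree_root T le \<in> tbranch T le s"
    using root s tree_root_eqI[OF tree root] unfolding tbranch_def by simp
  with chain convex show ?thesis
    unfolding initial_segment_def tsegment_def by (auto simp: tbranch_def)
qed

lemma imm_succ_seg_tbranch:
  assumes tree: "is_tree T le" and s: "s \<in> T" and t: "imm_succ_seg T le (tbranch T le s) t"
  shows "imm_succ T le s t"
proof -
  obtain m where m: "m \<in> T" "le m s" and max: "\<forall>y\<in>tbranch T le s. le y m"
    and "imm_succ T le m t"
    using t unfolding imm_succ_seg_def tbranch_def by blast
  moreover have "le s m" using max s tree_refl[OF tree s] unfolding tbranch_def by blast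
  ultimately show ?thesis using tree_antisym[OF tree m(1) s] by simp
qed

text \<open>The countable set witnessing failure of successive density consists of the successors
  of the root lying below the finitely many nodes to be avoided.\<close>

lemma not_successively_dense_avoiding:
  assumes tree: "is_tree T le" and root: "r \<in> T" "\<And>t. t \<in> T \<Longrightarrow> le r t"
    and nondense: "\<not> successively_dense T le (D \<inter> T)"
    and F: "finite F" "r \<notin> F"
  shows "\<exists>s\<in>T. \<not> (\<exists>x\<in>D \<inter> T. imm_succ T le s x) \<and> tbranch T le s \<inter> F = {}"
proof -
  have "\<forall>x\<in>F \<inter> T. \<exists>m. imm_succ T le r m \<and> le m x"
    using imm_succ_root_below[OF tree root] F(2) by blast
  then obtain c where c: "\<And>x. x \<in> F \<inter> T \<Longrightarrow> imm_succ T le r (c x) \<and> le (c x) x"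
    by metis
  have "countable (c ` (F \<inter> T))" using F(1) by (simp add: countable_finite)
  moreover have "\<forall>q\<in>c ` (F \<inter> T). imm_succ T le (tree_root T le) q"
    using c tree_root_eqI[OF tree root] by auto
  ultimately obtain t where t: "t \<in> T" "\<forall>q\<in>c ` (F \<inter> T). \<not> le t q \<and> \<not> le q t"
    "\<not> (\<exists>x\<in>D \<inter> T. imm_succ T le t x)"
    using nondense unfolding successively_dense_def by blast
  have "y \<notin> F" if "y \<in> tbranch T le t" for y
  proof
    assume "y \<in> F"
    with that have "c y \<in> T" "le (c y) y" "y \<in> T" "le y t"
      using c unfolding imm_succ_def tbranch_def by auto
    then have "le (c y) t" using tree_trans[OF tree _ _ t(1)] by blast
    with t(2) \<open>y \<in> F\<close> \<open>y \<in> T\<close> show False by blast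
  qed
  with t show ?thesis by blast
qed

lemma choice_disjoint_family_avoiding_past:
  fixes X :: "nat \<Rightarrow> 'b set" and S :: "nat \<Rightarrow> 'a \<Rightarrow> 'b set"
  assumes "\<And>n F. finite F \<Longrightarrow> F \<subseteq> (\<Union>k<n. X k) \<Longrightarrow>
    \<exists>s. P n s \<and> finite (S n s) \<and> S n s \<subseteq> X n \<and> S n s \<inter> F = {}"
  shows "\<exists>s. (\<forall>n. P n (s n)) \<and> disjoint_family (\<lambda>n. S n (s n))"
proof -
  have "\<forall>n F. \<exists>s. finite F \<and> F \<subseteq> (\<Union>k<n. X k) \<longrightarrow>
      P n s \<and> finite (S n s) \<and> S n s \<subseteq> X n \<and> S n s \<inter> F = {}"
    using assms by blast
  then obtain g where g: "\<And>n F. finite F \<Longrightarrow> F \<subseteq> (\<Union>k<n. X k) \<Longrightarrow>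
      P n (g n F) \<and> finite (S n (g n F)) \<and> S n (g n F) \<subseteq> X n \<and> S n (g n F) \<inter> F = {}"
    by metis
  define past where "past = rec_nat {} (\<lambda>n F. F \<union> S n (g n F))"
  have past_Suc: "past (Suc n) = past n \<union> S n (g n (past n))" for n
    by (simp add: past_def)
  have past_good: "finite (past n) \<and> past n \<subseteq> (\<Union>k<n. X k)" for n
  proof (induction n)
    case 0
    show ?case by (simp add: past_def)
  next
    case (Suc n)
    then have "finite (S n (g n (past n)))" "S n (g n (past n)) \<subseteq> X n"
      using g[of "past n" n] by simp_all
    with Suc show ?case
      unfolding past_Suc lessThan_Suc by blast
  qed
  define s where "s n = g n (past n)" for n
  have s: "P n (s n)" "S n (s n) \<inter> past n = {}" for n
    using g[of "past n" n] past_good[of n] unfolding s_def by simp_all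
  have earlier: "S m (s m) \<subseteq> past n" if "m < n" for m n
  proof -
    have "past (Suc m) \<subseteq> past n"
      by (rule lift_Suc_mono_le[of past]) (use that in \<open>auto simp: past_Suc\<close>)
    then show ?thesis by (simp add: past_Suc s_def)
  qed
  have "disjoint_family (\<lambda>n. S n (s n))"
    unfolding disjoint_family_on_def
  proof (intro ballI impI)
    fix m n :: nat assume "m \<noteq> n"
    then consider "m < n" | "n < m" by linarith
    then show "S m (s m) \<inter> S n (s n) = {}"
      using earlier s(2) by cases blast+
  qed
  with s(1) show ?thesis by blast
qed

lemma disjoint_nondense_branches:
  fixes T :: "nat \<Rightarrow> 'n set" and le :: "nat \<Rightarrow> 'n \<Rightarrow> 'n \<Rightarrow> bool"
  assumes tree: "\<And>n. is_tree (T n) (le n)"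
    and root: "\<And>n. r n \<in> T n" "\<And>n t. t \<in> T n \<Longrightarrow> le n (r n) t"
    and finite_pred: "\<And>n t. t \<in> T n \<Longrightarrow> finite (tpred (T n) (le n) t)"
    and root_notin: "\<And>n k. k \<noteq> n \<Longrightarrow> r n \<notin> T k"
    and nondense: "\<And>n. \<not> successively_dense (T n) (le n) (D n \<inter> T n)"
  shows "\<exists>s. (\<forall>n. s n \<in> T n \<and> \<not> (\<exists>x\<in>D n \<inter> T n. imm_succ (T n) (le n) (s n) x)) \<and>
    disjoint_family (\<lambda>n. tbranch (T n) (le n) (s n))"
proof (rule choice_disjoint_family_avoiding_past)
  fix n F assume F: "finite F" "F \<subseteq> (\<Union>k<n. T k)"
  have "r n \<notin> F"
  proof
    assume "r n \<in> F"
    then obtain k where "k < n" "r n \<in> T k" using F(2) by blast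
    then show False using root_notin[of k n] by simp
  qed
  then obtain s where "s \<in> T n" "\<not> (\<exists>x\<in>D n \<inter> T n. imm_succ (T n) (le n) s x)"
      "tbranch (T n) (le n) s \<inter> F = {}"
    using not_successively_dense_avoiding[OF tree root nondense F(1)] by blast
  moreover have "finite (tbranch (T n) (le n) s)"
    using finite_tbranch[OF tree \<open>s \<in> T n\<close> finite_pred[OF \<open>s \<in> T n\<close>]] .
  moreover have "tbranch (T n) (le n) s \<subseteq> T n" by (simp add: tbranch_def)
  ultimately show "\<exists>s. (s \<in> T n \<and> \<not> (\<exists>x\<in>D n \<inter> T n. imm_succ (T n) (le n) s x)) \<and>
      finite (tbranch (T n) (le n) s) \<and> tbranch (T n) (le n) s \<subseteq> T n \<and>
      tbranch (T n) (le n) s \<inter> F = {}"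
    by blast
qed

lemma reznichenko_family_tree:
  assumes rf: "reznichenko_family A F e T le" and a: "a \<in> A"
  shows "is_tree (T a) (le a)" and "e a \<in> T a" and "\<And>t. t \<in> T a \<Longrightarrow> le a (e a) t"
    and "\<And>t. t \<in> T a \<Longrightarrow> finite (tpred (T a) (le a) t)"
proof -
  note clauses = rf[unfolded reznichenko_family_def, THEN conjunct2]
  have "is_tree (T a) (le a) \<and> height_omega (T a) (le a)"
    using clauses[THEN conjunct1] a by blast
  then show "is_tree (T a) (le a)" "\<And>t. t \<in> T a \<Longrightarrow> finite (tpred (T a) (le a) t)"
    unfolding height_omega_def by blast+
  show "e a \<in> T a" "\<And>t. t \<in> T a \<Longrightarrow> le a (e a) t"
    using clauses[THEN conjunct2, THEN conjunct1] a by blast+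
qed

lemma reznichenko_family_root_notin:
  assumes rf: "reznichenko_family A F e T le" and "inj_on e A" "a \<in> A" "b \<in> A" "a \<noteq> b"
  shows "e a \<notin> T b"
proof
  assume "e a \<in> T b"
  moreover have "T b \<inter> e ` A = {e b}"
    using rf[unfolded reznichenko_family_def, THEN conjunct2, THEN conjunct2, THEN conjunct1] assms(4)
    by blast
  ultimately have "e a = e b" using assms(3) by blast
  with assms(2-5) show False unfolding inj_on_def by blast
qed

lemma reznichenko_family_common_imm_succ:
  assumes rf: "reznichenko_family A F e T le" and B: "B \<in> F" "B \<subseteq> A"
    and s: "\<And>b. b \<in> B \<Longrightarrow> s b \<in> T b"
    and disj: "disjoint_family_on (\<lambda>b. tbranch (T b) (le b) (s b)) B"
  shows "\<exists>t. \<forall>b\<in>B. imm_succ (T b) (le b) (s b) t"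
proof -
  let ?S = "\<lambda>b. tbranch (T b) (le b) (s b)"
  let ?C = "{t \<in> (\<Union>a\<in>A. T a). \<forall>b\<in>B. imm_succ_seg (T b) (le b) (?S b) t}"
  have tree: "is_tree (T b) (le b)" if "b \<in> B" for b
    using reznichenko_family_tree(1)[OF rf subsetD[OF B(2) that]] .
  have "finite (?S b) \<and> initial_segment (T b) (le b) (?S b)" if b: "b \<in> B" for b
    using reznichenko_family_tree[OF rf subsetD[OF B(2) b]] s[OF b]
      finite_tbranch initial_segment_tbranch by metis
  moreover have "\<forall>b\<in>B. \<forall>b'\<in>B. b \<noteq> b' \<longrightarrow> ?S b \<inter> ?S b' = {}"
    using disj unfolding disjoint_family_on_def by blast
  ultimately have "?C \<approx> (UNIV :: real set)"
    using rf[unfolded reznichenko_family_def, THEN conjunct2, THEN conjunct2, THEN conjunct2,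
        THEN conjunct2, THEN conjunct2, rule_format, OF B(1), of ?S]
    by blast
  then have "?C \<noteq> {}"
    by (metis UNIV_not_empty eqpoll_empty_iff_empty eqpoll_sym)
  then obtain t where t: "\<forall>b\<in>B. imm_succ_seg (T b) (le b) (?S b) t" by blast
  have "imm_succ (T b) (le b) (s b) t" if "b \<in> B" for b
    using imm_succ_seg_tbranch[OF tree[OF that] s[OF that]] t that by blast
  then show ?thesis by blast
qed

lemma disjoint_family_on_inv_range:
  assumes "inj a" "disjoint_family (\<lambda>n. S (a n) n)"
  shows "disjoint_family_on (\<lambda>b. S b (inv a b)) (range a)"
  unfolding disjoint_family_on_def
proof (intro ballI impI)
  fix b b' assume "b \<in> range a" "b' \<in> range a" "b \<noteq> b'"
  then obtain m n where "b = a m" "b' = a n" "m \<noteq> n" by blast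
  then show "S b (inv a b) \<inter> S b' (inv a b') = {}"
    using disjoint_family_onD[OF assms(2) UNIV_I UNIV_I, of m n] by (simp add: inv_f_f[OF assms(1)])
qed

lemma reznichenko_family_common_imm_succ_seq:
  assumes rf: "reznichenko_family A F e T le" and "inj a" "range a \<in> F" "range a \<subseteq> A"
    and s: "\<And>n. s n \<in> T (a n)"
    and disj: "disjoint_family (\<lambda>n. tbranch (T (a n)) (le (a n)) (s n))"
  shows "\<exists>t. \<forall>n. imm_succ (T (a n)) (le (a n)) (s n) t"
proof -
  have "s (inv a b) \<in> T b" if "b \<in> range a" for b
    using that s by (auto simp: inv_f_f[OF \<open>inj a\<close>])
  then obtain t where "\<forall>b\<in>range a. imm_succ (T b) (le b) (s (inv a b)) t"
    using reznichenko_family_common_imm_succ[OF rf assms(3,4) _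
        disjoint_family_on_inv_range[OF \<open>inj a\<close>, of "\<lambda>b n. tbranch (T b) (le b) (s n)", OF disj]]
    by blast
  then show ?thesis by (auto simp: inv_f_f[OF \<open>inj a\<close>])
qed

lemma closed_singleton_fun: "closed {f :: 'a \<Rightarrow> 'b::t1_space}"
proof -
  have "open ((\<lambda>g::'a \<Rightarrow> 'b. g k) -` (- {f k}))" for k
    using open_vimage[OF open_Compl[OF closed_singleton] continuous_on_product_coordinates] .
  then have "open (\<Union>k. (\<lambda>g::'a \<Rightarrow> 'b. g k) -` (- {f k}))" by blast
  moreover have "- {f} = (\<Union>k. (\<lambda>g. g k) -` (- {f k}))" by auto
  ultimately show ?thesis by (simp add: closed_def)
qed

lemma inj_of_mem_disjoint_family:
  assumes "disjoint_family U" "\<And>n. a n \<in> U n"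
  shows "inj a"
proof (rule injI)
  fix m n assume "a m = a n"
  then have "a m \<in> U m \<inter> U n" by (metis IntI assms(2))
  then show "m = n" using disjoint_family_onD[OF assms(1) UNIV_I UNIV_I, of m n] by blast
qed

lemma closed_discrete_range:
  fixes a :: "nat \<Rightarrow> 'a::topological_space"
  assumes U: "\<And>n. openin (top_of_set A) (U n)" "disjoint_family U"
    "closedin (top_of_set A) (\<Union>n. U n)"
    and a: "\<And>n. a n \<in> U n" "\<And>n. closed {a n}"
  shows "range a \<in> closed_discrete_subsets A"
proof -
  have UA: "U n \<subseteq> A" for n using openin_imp_subset[OF U(1)] .
  have a_eq: "a k \<in> U n \<longleftrightarrow> k = n" for k n
    using a(1)[of k] disjoint_family_onD[OF U(2) UNIV_I UNIV_I, of k n] by auto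
  have "A - range a = (A - (\<Union>n. U n)) \<union> (\<Union>n. U n \<inter> - {a n})"
    using UA a_eq by fastforce
  moreover have "openin (top_of_set A) (A - (\<Union>n. U n))"
    using openin_diff[OF openin_topspace U(3)] by simp
  moreover have "openin (top_of_set A) (\<Union>n. U n \<inter> - {a n})"
    by (rule openin_Union) (use openin_Int_open[OF U(1) open_Compl[OF a(2)]] in blast)
  ultimately have "openin (top_of_set A) (A - range a)" by (simp add: openin_Un)
  moreover have range_sub: "range a \<subseteq> A" using UA a(1) by blast
  ultimately have closed: "closedin (top_of_set A) (range a)" by (simp add: closedin_def)
  have isolated: "\<forall>x\<in>range a. \<exists>V. open V \<and> V \<inter> range a = {x}"
  proof
    fix x assume "x \<in> range a"
    then obtain n where x: "x = a n" by blast
    obtain V where V: "open V" "U n = A \<inter> V" using U(1)[of n] unfolding openin_open by blast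
    have "a k \<in> V \<longleftrightarrow> k = n" for k
      using V(2) range_sub a_eq[of k n] by auto
    then have "V \<inter> range a = {x}" using x by auto
    with V(1) show "\<exists>V. open V \<and> V \<inter> range a = {x}" by blast
  qed
  show ?thesis
    unfolding closed_discrete_subsets_def using range_sub closed isolated by blast
qed

theorem lemma4p3:
  fixes A :: "(nat \<Rightarrow> nat) set"
    and T :: "(nat \<Rightarrow> nat) \<Rightarrow> ((nat \<Rightarrow> nat) + 'x) set"
    and le :: "(nat \<Rightarrow> nat) \<Rightarrow> ((nat \<Rightarrow> nat) + 'x) \<Rightarrow> ((nat \<Rightarrow> nat) + 'x) \<Rightarrow> bool"
    and U :: "nat \<Rightarrow> (nat \<Rightarrow> nat) set"
    and D :: "nat \<Rightarrow> ((nat \<Rightarrow> nat) + 'x) set"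
  assumes "reznichenko_family A (closed_discrete_subsets A) Inl T le"
    and "\<And>n. openin (top_of_set A) (U n)"
    and "disjoint_family U"
    and "closedin (top_of_set A) (\<Union>n. U n)"
    and "(\<Union>a\<in>A. T a) = (\<Union>n. D n)"
  shows "\<exists>n. \<forall>a\<in>U n. successively_dense (T a) (le a) (D n \<inter> T a)"
proof (rule ccontr)
  assume "\<not> ?thesis"
  then have "\<forall>n. \<exists>x\<in>U n. \<not> successively_dense (T x) (le x) (D n \<inter> T x)" by blast
  then obtain a where aU: "\<And>n. a n \<in> U n"
    and nondense: "\<And>n. \<not> successively_dense (T (a n)) (le (a n)) (D n \<inter> T (a n))"
    by metis
  have aA: "a n \<in> A" for n using subsetD[OF openin_imp_subset[OF assms(2)] aU] .
  then have range_sub: "range a \<subseteq> A" by blast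
  have a_inj: "inj a" using inj_of_mem_disjoint_family[OF assms(3) aU] .
  note tree = reznichenko_family_tree[OF assms(1) aA]
  have root_notin: "Inl (a n) \<notin> T (a k)" if "k \<noteq> n" for k n
    using reznichenko_family_root_notin[OF assms(1) _ aA aA] inj_eq[OF a_inj] that
    by (simp add: inj_on_def)
  obtain s where s: "\<And>n. s n \<in> T (a n)"
      "\<And>n. \<not> (\<exists>x\<in>D n \<inter> T (a n). imm_succ (T (a n)) (le (a n)) (s n) x)"
    and disj: "disjoint_family (\<lambda>n. tbranch (T (a n)) (le (a n)) (s n))"
    using disjoint_nondense_branches[where T = "\<lambda>n. T (a n)" and le = "\<lambda>n. le (a n)"
        and r = "\<lambda>n. Inl (a n)", OF tree(1-4) root_notin nondense]
    by blast
  obtain t where succ: "\<And>n. imm_succ (T (a n)) (le (a n)) (s n) t"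
    using reznichenko_family_common_imm_succ_seq[where a = a and s = s, OF assms(1) a_inj
        closed_discrete_range[OF assms(2-4) aU closed_singleton_fun] range_sub s(1) disj]
    by blast
  then obtain m where "t \<in> D m" using assms(5) aA unfolding imm_succ_def by blast
  with succ[of m] s(2) show False unfolding imm_succ_def by blast
qed

end
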